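(* Let $n\ge 1$ and let $\mathcal{V}\subseteq\{0,1\}^n$ be a set of indicator vectors. Suppose that the primal shatter function of $\mathcal{V}$ has the $(d,d_1)$ Clarkson–Shor property for a fixed integer $d>0$ and a real $1\le d_1\le d$, with a fixed constant $C>0$. That is, for every index set $I\subseteq[n]$ with $|I|=m\le n$ and every integer $1\le k'\le m$, the number of vectors of $\mathcal{V}_{|_I}$ of length at most $k'$ is at most $C m^{d_1}k'^{\,d-d_1}$. Let $d_0$ be the VC-dimension of $\mathcal{V}$. Let $\delta$ be an integer with $1\le\delta\le n/2^{(d_0+1)}$, and let $k$ be an integer with $1\le k\le n$ and $k\ge\delta/2$. Then $$\mathcal{M}(\delta,k,\mathcal{V})=O\!\left(\frac{n^{d_1}k^{d-d_1}}{\delta^d}\right).$$ Here $\mathcal{M}(\delta,k,\mathcal{V})$ is the maximum cardinality of a $\delta$-separated subset of $\mathcal{V}$ all of whose vectors have length at most $k$. The constant of proportionality depends on $d$ (with $d_0$ and $C$ regarded as fixed) and not on $n$, $k$ or $\delta$.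
   Context: For $\mathbf{v}\in\{0,1\}^n$, its length is $\|\mathbf{v}\|=\sum_i|\mathbf{v}_i|$. The distance between two vectors is $\rho(\mathbf{u},\mathbf{v})=\sum_i|\mathbf{u}_i-\mathbf{v}_i|$, i.e. the Hamming distance. A set $\mathcal{W}$ of vectors is $\delta$-separated if $\rho(\mathbf{u},\mathbf{v})>\delta$ for all distinct $\mathbf{u},\mathbf{v}\in\mathcal{W}$. For a sequence of indices $I=(i_1,\dots,i_m)$, the projection is $\mathcal{V}_{|_I}=\{(\mathbf{v}_{i_1},\dots,\mathbf{v}_{i_m}):\mathbf{v}\in\mathcal{V}\}$, a set of distinct vectors. The primal shatter function is $\pi_{\mathcal{V}}(m)=\max_{|I|=m}|\mathcal{V}_{|_I}|$. An index sequence $I$ is shattered if $\mathcal{V}_{|_I}=\{0,1\}^{|I|}$. The VC-dimension $d_0$ is the largest size of a shattered sequence. *)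

theory Defs
  imports Complex_Main
begin

text \<open>A vector in {0,1}^n is represented by its support, a subset of {..<n}.
  A set of indicator vectors is thus a set V with V \<subseteq> Pow {..<n}.\<close>

definition vlen :: "nat set \<Rightarrow> nat" where
  "vlen v = card v"

definition hdist :: "nat set \<Rightarrow> nat set \<Rightarrow> nat" where
  "hdist u v = card ((u - v) \<union> (v - u))"

definition separated :: "nat \<Rightarrow> nat set set \<Rightarrow> bool" where
  "separated \<delta> W \<longleftrightarrow> (\<forall>u\<in>W. \<forall>v\<in>W. u \<noteq> v \<longrightarrow> hdist u v > \<delta>)"

definition proj :: "nat set set \<Rightarrow> nat set \<Rightarrow> nat set set" where
  "proj V I = (\<lambda>v. v \<inter> I) ` V"

definition shattered :: "nat set set \<Rightarrow> nat set \<Rightarrow> bool" where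
  "shattered V I \<longleftrightarrow> proj V I = Pow I"

definition vc_dim :: "nat \<Rightarrow> nat set set \<Rightarrow> nat" where
  "vc_dim n V = Sup {card I | I. I \<subseteq> {..<n} \<and> shattered V I}"

definition Mpack :: "nat \<Rightarrow> nat \<Rightarrow> nat set set \<Rightarrow> nat" where
  "Mpack \<delta> k V = Sup {card W | W. W \<subseteq> V \<and> separated \<delta> W \<and> (\<forall>v\<in>W. vlen v \<le> k)}"

definition clarkson_shor :: "nat \<Rightarrow> nat set set \<Rightarrow> nat \<Rightarrow> real \<Rightarrow> real \<Rightarrow> bool" where
  "clarkson_shor n V d d1 C \<longleftrightarrow>
     (\<forall>I k'. I \<subseteq> {..<n} \<and> 1 \<le> k' \<and> k' \<le> card I \<longrightarrow>
        real (card {w \<in> proj V I. vlen w \<le> k'})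
          \<le> C * real (card I) powr d1 * real k' powr (real d - d1))"

end

theory Submission
  imports Defs
begin

text \<open>Haussler's packing argument, localised to short vectors. Take a uniformly random set B of
  m = O(d0 n / \<delta>) coordinates. The traces on B of a \<delta>-separated family W of VC-dimension
  at most d0 are, on average, at least card W / 2 in number: the members lost by projecting are
  charged to edges of one-inclusion graphs, which have at most d0 times as many edges as
  vertices. On the other hand, a vector of length at most k has more than t = O(k m / n)
  coordinates in B for at most a quarter of the choices of B (Markov), and the remaining traces
  are vectors of length at most t in the projection onto B, of which the Clarkson-Shor property
  allows C m^d1 t^(d - d1). Hence card W \<le> 4 C m^d1 t^(d - d1) = O(n^d1 k^(d - d1) / \<delta>^d).
  For \<delta> below 4 (d0 + 1) the Clarkson-Shor bound on all n coordinates already suffices.\<close>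

section \<open>Shattering and the one-inclusion graph\<close>

definition vc_dim_le :: "nat set \<Rightarrow> nat set set \<Rightarrow> nat \<Rightarrow> bool" where
  "vc_dim_le G F d \<longleftrightarrow> (\<forall>S\<subseteq>G. shattered F S \<longrightarrow> card S \<le> d)"

lemma proj_subset_Pow: "proj F S \<subseteq> Pow S"
  unfolding proj_def by blast

lemma shattered_if_proj_subset:
  assumes "proj F S \<subseteq> proj F' S" "shattered F S"
  shows "shattered F' S"
  using assms proj_subset_Pow[of F' S] unfolding shattered_def by blast

lemma vc_dim_le_trace_mono:
  assumes "vc_dim_le G F d" "G' \<subseteq> G" "\<And>S. S \<subseteq> G' \<Longrightarrow> proj F' S \<subseteq> proj F S"
  shows "vc_dim_le G' F' d"
  using assms shattered_if_proj_subset unfolding vc_dim_le_def by (meson order_trans)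

lemma vc_dim_le_subset: "vc_dim_le G V d \<Longrightarrow> W \<subseteq> V \<Longrightarrow> vc_dim_le G W d"
  by (rule vc_dim_le_trace_mono) (auto simp: proj_def)

lemma vc_dim_le_vc_dim: "vc_dim_le {..<n} V (vc_dim n V)"
  unfolding vc_dim_le_def
proof (intro allI impI)
  fix S assume "S \<subseteq> {..<n}" "shattered V S"
  moreover have "bdd_above {card I | I. I \<subseteq> {..<n} \<and> shattered V I}"
    by (rule bdd_aboveI[of _ n]) (auto dest: card_mono[OF finite_lessThan])
  ultimately show "card S \<le> vc_dim n V" unfolding vc_dim_def by (auto intro: cSup_upper)
qed

definition one_incl_edges :: "nat set \<Rightarrow> nat set set \<Rightarrow> (nat \<times> nat set) set" where
  "one_incl_edges G F = {(j, p). p \<in> F \<and> j \<in> G \<and> j \<notin> p \<and> insert j p \<in> F}"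

definition erase :: "nat \<Rightarrow> nat set set \<Rightarrow> nat set set" where
  "erase a F = (\<lambda>p. p - {a}) ` F"

definition twins :: "nat \<Rightarrow> nat set set \<Rightarrow> nat set set" where
  "twins a F = {p \<in> F. a \<notin> p \<and> insert a p \<in> F}"

lemma finite_one_incl_edges:
  assumes "finite G" "F \<subseteq> Pow G"
  shows "finite (one_incl_edges G F)"
proof -
  have "finite F" using assms finite_subset by blast
  moreover have "one_incl_edges G F \<subseteq> G \<times> F" unfolding one_incl_edges_def by blast
  ultimately show ?thesis using assms(1) finite_subset by blast
qed

lemma card_erase_plus_card_twins:
  assumes "finite F"
  shows "card (erase a F) + card (twins a F) = card F"
proof -
  define F0 where "F0 = {p \<in> F. a \<notin> p}"
  define F1 where "F1 = {p \<in> F. a \<in> p}"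
  have "F = F0 \<union> F1" "F0 \<inter> F1 = {}" unfolding F0_def F1_def by auto
  then have card_F: "card F = card F0 + card F1"
    using assms by (simp add: card_Un_disjoint)
  have "(\<lambda>p. p - {a}) ` F0 = (\<lambda>p. p) ` F0" by (rule image_cong) (auto simp: F0_def)
  then have "(\<lambda>p. p - {a}) ` F0 = F0" by simp
  then have erase_eq: "erase a F = F0 \<union> (\<lambda>p. p - {a}) ` F1"
    unfolding erase_def by (subst \<open>F = F0 \<union> F1\<close>) (simp only: image_Un)
  have twins_eq: "twins a F = F0 \<inter> (\<lambda>p. p - {a}) ` F1"
  proof (intro set_eqI iffI)
    fix q assume "q \<in> twins a F"
    then have "q \<in> F0" "insert a q \<in> F1" "q = insert a q - {a}"
      unfolding twins_def F0_def F1_def by auto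
    then show "q \<in> F0 \<inter> (\<lambda>p. p - {a}) ` F1" by blast
  next
    fix q assume "q \<in> F0 \<inter> (\<lambda>p. p - {a}) ` F1"
    then obtain p where "q \<in> F" "a \<notin> q" "p \<in> F" "a \<in> p" "q = p - {a}"
      unfolding F0_def F1_def by blast
    then show "q \<in> twins a F" unfolding twins_def by (simp add: insert_absorb)
  qed
  have "inj_on (\<lambda>p. p - {a}) F1" unfolding F1_def inj_on_def by blast
  then have "card ((\<lambda>p. p - {a}) ` F1) = card F1" by (rule card_image)
  moreover have "finite F0" "finite F1" using assms unfolding F0_def F1_def by auto
  ultimately show ?thesis
    using card_Un_Int[of F0 "(\<lambda>p. p - {a}) ` F1"] card_F erase_eq twins_eq by simp
qed

lemma proj_erase_subset:
  assumes "a \<notin> S"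
  shows "proj (erase a F) S \<subseteq> proj F S"
proof
  fix w assume "w \<in> proj (erase a F) S"
  then obtain p where "p \<in> F" "w = (p - {a}) \<inter> S" unfolding proj_def erase_def by auto
  moreover have "(p - {a}) \<inter> S = p \<inter> S" using assms by auto
  ultimately show "w \<in> proj F S" unfolding proj_def by auto
qed

lemma shattered_insert_if_twins_shattered:
  assumes "shattered (twins a F) S"
  shows "shattered F (insert a S)"
proof -
  have "X \<in> proj F (insert a S)" if X: "X \<subseteq> insert a S" for X
  proof -
    have "X - {a} \<in> proj (twins a F) S" using X assms unfolding shattered_def by auto
    then obtain q where q: "q \<in> F" "a \<notin> q" "insert a q \<in> F" "X - {a} = q \<inter> S"
      unfolding proj_def twins_def by auto
    show ?thesis
    proof (cases "a \<in> X")
      case True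
      then have "X = insert a q \<inter> insert a S" using q X by auto
      then show ?thesis using q unfolding proj_def by auto
    next
      case False
      then have "X = q \<inter> insert a S" using q X by auto
      then show ?thesis using q unfolding proj_def by auto
    qed
  qed
  then show ?thesis unfolding shattered_def proj_def by auto
qed

lemma vc_dim_le_erase:
  assumes "vc_dim_le (insert a G) F d" "a \<notin> G"
  shows "vc_dim_le G (erase a F) d"
proof (rule vc_dim_le_trace_mono[OF assms(1)])
  fix S assume "S \<subseteq> G"
  then have "a \<notin> S" using assms(2) by blast
  then show "proj (erase a F) S \<subseteq> proj F S" by (rule proj_erase_subset)
qed blast

lemma card_insert_shattered_by_twins_le:
  assumes "vc_dim_le (insert a G) F d" "S \<subseteq> G" "shattered (twins a F) S"
  shows "card (insert a S) \<le> d"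
proof -
  have "insert a S \<subseteq> insert a G" using assms(2) by blast
  moreover have "shattered F (insert a S)"
    using assms(3) by (rule shattered_insert_if_twins_shattered)
  ultimately show ?thesis using assms(1) unfolding vc_dim_le_def by blast
qed

lemma vc_dim_le_twins:
  assumes "vc_dim_le (insert a G) F d" "a \<notin> G" "finite G"
  shows "vc_dim_le G (twins a F) (d - 1)"
  unfolding vc_dim_le_def
proof (intro allI impI)
  fix S assume S: "S \<subseteq> G" "shattered (twins a F) S"
  have "finite S" "a \<notin> S" using S(1) assms(2,3) finite_subset by blast+
  then have "card (insert a S) = Suc (card S)" by simp
  moreover have "card (insert a S) \<le> d"
    using assms(1) S by (rule card_insert_shattered_by_twins_le)
  ultimately show "card S \<le> d - 1" by simp
qed

lemma one_le_if_twins_nonempty: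
  assumes "vc_dim_le (insert a G) F d" "twins a F \<noteq> {}"
  shows "1 \<le> d"
proof -
  have "proj (twins a F) {} = {{}}" using assms(2) unfolding proj_def by blast
  then have "shattered (twins a F) {}" unfolding shattered_def by simp
  then have "card (insert a {}) \<le> d"
    using assms(1) by (intro card_insert_shattered_by_twins_le) auto
  then show ?thesis by simp
qed

lemma one_incl_edges_direction:
  assumes "a \<in> G"
  shows "{x \<in> one_incl_edges G F. fst x = a} = Pair a ` twins a F"
proof (rule set_eqI)
  fix x :: "nat \<times> nat set"
  obtain j p where "x = (j, p)" by fastforce
  then show "x \<in> {x \<in> one_incl_edges G F. fst x = a} \<longleftrightarrow> x \<in> Pair a ` twins a F"
    using assms unfolding twins_def one_incl_edges_def by auto
qed

lemma erase_one_incl_edge: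
  assumes "(j, p) \<in> one_incl_edges (insert a G) F" "j \<in> G" "a \<notin> G"
  shows "(j, p - {a}) \<in> one_incl_edges G (erase a F)"
proof -
  have "p \<in> F" "insert j p \<in> F" "j \<notin> p" using assms(1) unfolding one_incl_edges_def by auto
  moreover have "insert j (p - {a}) = insert j p - {a}" using assms(2,3) by auto
  ultimately have "p - {a} \<in> erase a F" "insert j (p - {a}) \<in> erase a F" "j \<notin> p - {a}"
    unfolding erase_def by auto
  then show ?thesis using assms(2) unfolding one_incl_edges_def by auto
qed

lemma twins_one_incl_edge:
  assumes "(j, q) \<in> one_incl_edges (insert a G) F" "(j, insert a q) \<in> one_incl_edges (insert a G) F"
    and "a \<notin> q" "j \<in> G" "a \<notin> G"
  shows "(j, q) \<in> one_incl_edges G (twins a F)"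
proof -
  have "j \<noteq> a" using assms(4,5) by auto
  then have "q \<in> twins a F" "insert j q \<in> twins a F"
    using assms(1-3) unfolding twins_def one_incl_edges_def by (auto simp: insert_commute)
  then show ?thesis using assms(1,4) unfolding one_incl_edges_def by auto
qed

text \<open>An edge in a direction j \<in> G survives erasing a; two such edges collide only if both of
  their endpoints are twins, and then they give an edge of twins a F.\<close>
lemma card_one_incl_edges_other_directions_le:
  assumes "finite G" "a \<notin> G" "F \<subseteq> Pow (insert a G)"
  shows "card {x \<in> one_incl_edges (insert a G) F. fst x \<in> G}
    \<le> card (one_incl_edges G (erase a F)) + card (one_incl_edges G (twins a F))"
proof -
  define E where "E = one_incl_edges (insert a G) F"
  define Eout where "Eout = {x \<in> E. fst x \<in> G \<and> a \<notin> snd x}"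
  define Ein where "Ein = {x \<in> E. fst x \<in> G \<and> a \<in> snd x}"
  define h :: "nat \<times> nat set \<Rightarrow> nat \<times> nat set" where "h = (\<lambda>(j, p). (j, p - {a}))"
  have "finite E" unfolding E_def using assms by (intro finite_one_incl_edges) auto
  then have fin: "finite Eout" "finite Ein" unfolding Eout_def Ein_def by auto
  have "{x \<in> E. fst x \<in> G} = Eout \<union> Ein" "Eout \<inter> Ein = {}" unfolding Eout_def Ein_def by auto
  then have card_EG: "card {x \<in> E. fst x \<in> G} = card Eout + card Ein"
    using fin by (simp add: card_Un_disjoint)
  have Eout_sub: "Eout \<subseteq> one_incl_edges G (erase a F)"
  proof
    fix x assume "x \<in> Eout"
    then obtain j p where "x = (j, p)" "(j, p) \<in> E" "j \<in> G" "a \<notin> p"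
      unfolding Eout_def by (cases x) auto
    then show "x \<in> one_incl_edges G (erase a F)"
      using erase_one_incl_edge[OF _ _ assms(2), of j p F] unfolding E_def by simp
  qed
  have Ein_sub: "h ` Ein \<subseteq> one_incl_edges G (erase a F)"
    using erase_one_incl_edge[OF _ _ assms(2)] unfolding Ein_def E_def h_def by auto
  have "inj_on h Ein" unfolding h_def Ein_def by (rule inj_onI) (auto split: prod.splits)
  then have card_Ein: "card (h ` Ein) = card Ein" by (rule card_image)
  have collide_sub: "Eout \<inter> h ` Ein \<subseteq> one_incl_edges G (twins a F)"
  proof
    fix y assume "y \<in> Eout \<inter> h ` Ein"
    then obtain j p where "(j, p) \<in> E" "a \<in> p" "y = (j, p - {a})" "y \<in> Eout"
      unfolding h_def Ein_def by auto
    then show "y \<in> one_incl_edges G (twins a F)"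
      using twins_one_incl_edge[of j "p - {a}" a G F] assms(2)
      unfolding Eout_def E_def by (auto simp: insert_absorb)
  qed
  have fin_edges: "finite (one_incl_edges G (erase a F))" "finite (one_incl_edges G (twins a F))"
    using assms unfolding erase_def twins_def by (auto intro!: finite_one_incl_edges)
  have "card Eout + card Ein = card (Eout \<union> h ` Ein) + card (Eout \<inter> h ` Ein)"
    using card_Un_Int[of Eout "h ` Ein"] fin card_Ein by simp
  also have "\<dots> \<le> card (one_incl_edges G (erase a F)) + card (one_incl_edges G (twins a F))"
    using Eout_sub Ein_sub collide_sub fin_edges by (intro add_mono card_mono) auto
  finally show ?thesis using card_EG unfolding E_def by linarith
qed

lemma card_one_incl_edges_insert_le:
  assumes "finite G" "a \<notin> G" "F \<subseteq> Pow (insert a G)"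
  shows "card (one_incl_edges (insert a G) F)
    \<le> card (twins a F) + card (one_incl_edges G (erase a F)) + card (one_incl_edges G (twins a F))"
proof -
  define E where "E = one_incl_edges (insert a G) F"
  have "finite E" unfolding E_def using assms by (intro finite_one_incl_edges) auto
  have "fst x \<in> insert a G" if "x \<in> E" for x
    using that unfolding E_def one_incl_edges_def by auto
  then have "E = {x \<in> E. fst x = a} \<union> {x \<in> E. fst x \<in> G}" by blast
  moreover have "{x \<in> E. fst x = a} \<inter> {x \<in> E. fst x \<in> G} = {}" using assms(2) by auto
  ultimately have "card E = card {x \<in> E. fst x = a} + card {x \<in> E. fst x \<in> G}"
    using \<open>finite E\<close> by (metis (no_types, lifting) card_Un_disjoint finite_Un)
  moreover have "card {x \<in> E. fst x = a} = card (twins a F)"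
    unfolding E_def one_incl_edges_direction[OF insertI1] by (simp add: card_image inj_on_def)
  ultimately show ?thesis
    using card_one_incl_edges_other_directions_le[OF assms] unfolding E_def by linarith
qed

lemma card_one_incl_edges_le:
  assumes "finite G" "F \<subseteq> Pow G" "vc_dim_le G F d"
  shows "card (one_incl_edges G F) \<le> d * card F"
  using assms
proof (induction G arbitrary: F d rule: finite_induct)
  case empty
  then show ?case by (simp add: one_incl_edges_def)
next
  case (insert a G)
  have "finite F" using insert.prems(1) insert.hyps(1) by (meson finite_Pow_iff finite_insert finite_subset)
  have "erase a F \<subseteq> Pow G" "twins a F \<subseteq> Pow G"
    using insert.prems(1) unfolding erase_def twins_def by auto
  have IH_erase: "card (one_incl_edges G (erase a F)) \<le> d * card (erase a F)"
    using \<open>erase a F \<subseteq> Pow G\<close> vc_dim_le_erase[OF insert.prems(2) insert.hyps(2)]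
    by (rule insert.IH)
  have IH_twins: "card (one_incl_edges G (twins a F)) \<le> (d - 1) * card (twins a F)"
    using \<open>twins a F \<subseteq> Pow G\<close> vc_dim_le_twins[OF insert.prems(2) insert.hyps(2,1)]
    by (rule insert.IH)
  have twins_bound: "card (twins a F) + card (one_incl_edges G (twins a F)) \<le> d * card (twins a F)"
  proof (cases "twins a F = {}")
    case False
    then have "1 \<le> d" using one_le_if_twins_nonempty insert.prems(2) by blast
    then show ?thesis using IH_twins by (cases d) auto
  qed (simp add: one_incl_edges_def)
  show ?case
  proof -
    have "d * card F = d * card (erase a F) + d * card (twins a F)"
      using card_erase_plus_card_twins[OF \<open>finite F\<close>, of a] by (metis add_mult_distrib2)
    then show ?thesis
      using card_one_incl_edges_insert_le[OF insert.hyps(1,2) insert.prems(1)] IH_erase twins_bound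
      by linarith
  qed
qed

section \<open>Multiplicities of traces\<close>

lemma card_filter_eq_sum:
  "finite A \<Longrightarrow> card {x\<in>A. P x} = (\<Sum>x\<in>A. if P x then 1 else 0)"
  by (simp add: sum.If_cases Int_def)

lemma sum_card_filter_swap:
  assumes "finite A" "finite B"
  shows "(\<Sum>x\<in>A. card {y\<in>B. P x y}) = (\<Sum>y\<in>B. card {x\<in>A. P x y})"
proof -
  have "(\<Sum>x\<in>A. card {y\<in>B. P x y}) = (\<Sum>x\<in>A. \<Sum>y\<in>B. if P x y then 1 else 0)"
    using assms(2) by (intro sum.cong refl card_filter_eq_sum)
  also have "\<dots> = (\<Sum>y\<in>B. \<Sum>x\<in>A. if P x y then 1 else 0)" by (rule sum.swap)
  also have "\<dots> = (\<Sum>y\<in>B. card {x\<in>A. P x y})"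
    using assms(1) by (intro sum.cong refl card_filter_eq_sum[symmetric])
  finally show ?thesis .
qed

lemma sum_eq_sum_card_superlevel:
  fixes f :: "'a \<Rightarrow> nat"
  assumes "finite D" "\<And>x. x \<in> D \<Longrightarrow> f x \<le> N"
  shows "(\<Sum>x\<in>D. f x) = (\<Sum>t\<in>{1..N}. card {x\<in>D. t \<le> f x})"
proof -
  have "(\<Sum>x\<in>D. f x) = (\<Sum>x\<in>D. card {t\<in>{1..N}. t \<le> f x})"
  proof (rule sum.cong)
    fix x assume "x \<in> D"
    then have "{t\<in>{1..N}. t \<le> f x} = {1..f x}" using assms(2)[of x] by auto
    then show "f x = card {t\<in>{1..N}. t \<le> f x}" by simp
  qed simp
  also have "\<dots> = (\<Sum>x\<in>D. \<Sum>t\<in>{1..N}. if t \<le> f x then 1 else 0)"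
    by (intro sum.cong refl card_filter_eq_sum) simp
  also have "\<dots> = (\<Sum>t\<in>{1..N}. \<Sum>x\<in>D. if t \<le> f x then 1 else 0)"
    by (rule sum.swap)
  also have "\<dots> = (\<Sum>t\<in>{1..N}. card {x\<in>D. t \<le> f x})"
    using card_filter_eq_sum[OF assms(1)] by simp
  finally show ?thesis .
qed

definition trace_mult :: "nat set set \<Rightarrow> nat set \<Rightarrow> nat set \<Rightarrow> nat" where
  "trace_mult W A p = card {u \<in> W. u \<inter> A = p}"

lemma trace_mult_le_card: "finite W \<Longrightarrow> trace_mult W A p \<le> card W"
  unfolding trace_mult_def by (rule card_mono) auto

lemma sum_trace_mult:
  assumes "finite A" "finite W"
  shows "(\<Sum>p\<in>Pow A. trace_mult W A p) = card W"
proof -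
  have "(\<Sum>p\<in>Pow A. \<Sum>u\<in>{u\<in>W. u \<inter> A = p}. 1::nat) = (\<Sum>u\<in>W. 1)"
    by (rule sum.group) (use assms in auto)
  then show ?thesis unfolding trace_mult_def by simp
qed

lemma proj_superlevel_subset:
  assumes "1 \<le> t" "S \<subseteq> A"
  shows "proj {p \<in> Pow A. t \<le> trace_mult W A p} S \<subseteq> proj W S"
proof
  fix y assume "y \<in> proj {p \<in> Pow A. t \<le> trace_mult W A p} S"
  then obtain p where p: "t \<le> trace_mult W A p" "y = p \<inter> S" unfolding proj_def by auto
  then have "card {u \<in> W. u \<inter> A = p} \<noteq> 0" using assms(1) unfolding trace_mult_def by linarith
  then have "{u \<in> W. u \<inter> A = p} \<noteq> {}" by (metis card.empty)
  then obtain u where "u \<in> W" "u \<inter> A = p" by auto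
  then have "y = u \<inter> S" using p assms(2) by auto
  then show "y \<in> proj W S" using \<open>u \<in> W\<close> unfolding proj_def by auto
qed

text \<open>Slicing the multiplicities into superlevel sets reduces this weighted edge bound to the
  unweighted one.\<close>
lemma sum_min_trace_mult_le:
  assumes "finite A" "finite W" "vc_dim_le A W d"
  shows "(\<Sum>(j, p)\<in>(SIGMA j:A. Pow (A - {j})). min (trace_mult W A p) (trace_mult W A (insert j p)))
    \<le> d * card W"
proof -
  define N where "N = card W"
  define P where "P t = {p \<in> Pow A. t \<le> trace_mult W A p}" for t
  define D where "D = (SIGMA j:A. Pow (A - {j}))"
  define g where "g = (\<lambda>(j, p). min (trace_mult W A p) (trace_mult W A (insert j p)))"
  have "finite D" unfolding D_def using assms(1) by auto
  have level: "{x \<in> D. t \<le> g x} = one_incl_edges A (P t)" for t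
    unfolding D_def P_def g_def one_incl_edges_def by auto
  have "(\<Sum>x\<in>D. g x) = (\<Sum>t\<in>{1..N}. card {x\<in>D. t \<le> g x})"
    by (rule sum_eq_sum_card_superlevel[OF \<open>finite D\<close>])
      (auto simp: g_def N_def trace_mult_le_card[OF assms(2)] min.coboundedI1)
  also have "\<dots> = (\<Sum>t\<in>{1..N}. card (one_incl_edges A (P t)))" by (simp only: level)
  also have "\<dots> \<le> (\<Sum>t\<in>{1..N}. d * card (P t))"
  proof (rule sum_mono)
    fix t :: nat assume "t \<in> {1..N}"
    then have "vc_dim_le A (P t) d"
      unfolding P_def using assms(3) proj_superlevel_subset
      by (intro vc_dim_le_trace_mono[OF assms(3)]) auto
    then show "card (one_incl_edges A (P t)) \<le> d * card (P t)"
      using assms(1) by (intro card_one_incl_edges_le) (auto simp: P_def)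
  qed
  also have "\<dots> = d * (\<Sum>p\<in>Pow A. trace_mult W A p)"
    using sum_eq_sum_card_superlevel[of "Pow A" "trace_mult W A" N] assms trace_mult_le_card
    unfolding P_def N_def by (simp add: sum_distrib_left)
  also have "\<dots> = d * card W" using assms(1,2) by (simp add: sum_trace_mult)
  finally show ?thesis unfolding D_def g_def .
qed

section \<open>Haussler's sampling lemma\<close>

lemma hdist_eq_card_differ:
  assumes "finite J" "(u - v) \<union> (v - u) \<subseteq> J"
  shows "hdist u v = card {j\<in>J. (j \<in> u) \<noteq> (j \<in> v)}"
proof -
  have "{j\<in>J. (j \<in> u) \<noteq> (j \<in> v)} = (u - v) \<union> (v - u)" using assms(2) by blast
  then show ?thesis unfolding hdist_def by simp
qed

lemma sum_sum_differ_at: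
  assumes "finite F"
  shows "(\<Sum>u\<in>F. card {v\<in>F. (j \<in> u) \<noteq> (j \<in> v)})
    = 2 * card {u\<in>F. j \<notin> u} * card {u\<in>F. j \<in> u}"
proof -
  have "(\<Sum>u\<in>F. card {v\<in>F. (j \<in> u) \<noteq> (j \<in> v)})
      = (\<Sum>u\<in>F. if j \<in> u then card {v\<in>F. j \<notin> v} else card {v\<in>F. j \<in> v})"
    by (rule sum.cong) auto
  also have "\<dots> = card {u\<in>F. j \<in> u} * card {v\<in>F. j \<notin> v} + card {u\<in>F. j \<notin> u} * card {v\<in>F. j \<in> v}"
    using assms by (simp add: sum.If_cases Int_def Diff_eq[symmetric] set_diff_eq)
  finally show ?thesis by simp
qed

lemma sum_hdist_ge_if_separated:
  assumes "finite F" "separated \<delta> F" "u \<in> F"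
  shows "(card F - 1) * \<delta> \<le> (\<Sum>v\<in>F. hdist u v)"
proof -
  have "(card F - 1) * \<delta> = (\<Sum>v\<in>F - {u}. \<delta>)" using assms(1,3) by (simp add: card_Diff_singleton)
  also have "\<dots> \<le> (\<Sum>v\<in>F - {u}. hdist u v)"
    using assms(2,3) unfolding separated_def by (intro sum_mono) (auto intro: less_imp_le)
  also have "\<dots> \<le> (\<Sum>v\<in>F. hdist u v)" using assms(1) by (intro sum_mono2) auto
  finally show ?thesis .
qed

lemma sum_sum_hdist_eq:
  assumes "finite J" "finite F"
    and "\<And>u v. u \<in> F \<Longrightarrow> v \<in> F \<Longrightarrow> (u - v) \<union> (v - u) \<subseteq> J"
  shows "(\<Sum>u\<in>F. \<Sum>v\<in>F. hdist u v) = (\<Sum>j\<in>J. 2 * card {u\<in>F. j \<notin> u} * card {u\<in>F. j \<in> u})"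
proof -
  have "(\<Sum>u\<in>F. \<Sum>v\<in>F. hdist u v) = (\<Sum>u\<in>F. \<Sum>v\<in>F. \<Sum>j\<in>J. if (j \<in> u) \<noteq> (j \<in> v) then 1 else 0)"
    using hdist_eq_card_differ[OF assms(1,3)] assms(1)
    by (intro sum.cong refl) (simp add: card_filter_eq_sum)
  also have "\<dots> = (\<Sum>j\<in>J. \<Sum>u\<in>F. \<Sum>v\<in>F. if (j \<in> u) \<noteq> (j \<in> v) then 1 else 0)"
    by (simp only: sum.swap[of _ J])
  also have "\<dots> = (\<Sum>j\<in>J. 2 * card {u\<in>F. j \<notin> u} * card {u\<in>F. j \<in> u})"
    using sum_sum_differ_at[OF assms(2)] assms(2) by (simp add: card_filter_eq_sum)
  finally show ?thesis .
qed

text \<open>Counting the differing coordinates of all ordered pairs of a \<delta>-separated family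
  in two ways: per pair there are more than \<delta> of them, while a coordinate j splits F into
  parts of sizes a and b and contributes 2ab \<le> 2 |F| min(a, b).\<close>
lemma separated_card_le_sum_min:
  assumes "finite J" "finite F" "separated \<delta> F"
    and "\<And>u v. u \<in> F \<Longrightarrow> v \<in> F \<Longrightarrow> (u - v) \<union> (v - u) \<subseteq> J"
  shows "(card F - 1) * \<delta> \<le> 2 * (\<Sum>j\<in>J. min (card {u\<in>F. j \<notin> u}) (card {u\<in>F. j \<in> u}))"
proof (cases "F = {}")
  case False
  define N where "N = card F"
  define a where "a j = card {u\<in>F. j \<notin> u}" for j
  define b where "b j = card {u\<in>F. j \<in> u}" for j
  have "N \<ge> 1" unfolding N_def using assms(2) False by (simp add: Suc_le_eq card_gt_0_iff)
  have ab: "a j + b j = N" for j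
    unfolding a_def b_def N_def using assms(2)
    by (subst card_Un_disjoint[symmetric]) (auto intro: arg_cong[of _ _ card])
  have "N * ((N - 1) * \<delta>) = (\<Sum>u\<in>F. (N - 1) * \<delta>)" unfolding N_def by simp
  also have "\<dots> \<le> (\<Sum>u\<in>F. \<Sum>v\<in>F. hdist u v)"
    unfolding N_def using assms(2,3) by (intro sum_mono sum_hdist_ge_if_separated)
  also have "\<dots> = (\<Sum>j\<in>J. 2 * a j * b j)"
    unfolding a_def b_def using assms(1,2,4) by (rule sum_sum_hdist_eq)
  also have "\<dots> \<le> (\<Sum>j\<in>J. 2 * N * min (a j) (b j))"
  proof (rule sum_mono)
    fix j
    have "a j * b j \<le> (a j + b j) * min (a j) (b j)" by (simp add: min_def add_mult_distrib)
    then show "2 * a j * b j \<le> 2 * N * min (a j) (b j)" unfolding ab by simp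
  qed
  also have "\<dots> = N * (2 * (\<Sum>j\<in>J. min (a j) (b j)))"
    by (simp add: sum_distrib_left mult.assoc mult.left_commute)
  finally show ?thesis using \<open>N \<ge> 1\<close> unfolding a_def b_def N_def by simp
qed simp

lemma separated_subset: "separated \<delta> W \<Longrightarrow> F \<subseteq> W \<Longrightarrow> separated \<delta> F"
  unfolding separated_def by blast

definition split_weight :: "nat set set \<Rightarrow> nat set \<Rightarrow> nat \<Rightarrow> nat" where
  "split_weight W B j =
    (\<Sum>w\<in>Pow B. min (trace_mult W (insert j B) w) (trace_mult W (insert j B) (insert j w)))"

lemma trace_mult_insert_eq_card_fiber:
  assumes "j \<notin> B" "w \<subseteq> B"
  shows "trace_mult W (insert j B) w = card {u\<in>{u\<in>W. u \<inter> B = w}. j \<notin> u}"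
    and "trace_mult W (insert j B) (insert j w) = card {u\<in>{u\<in>W. u \<inter> B = w}. j \<in> u}"
proof -
  have "u \<inter> insert j B = w \<longleftrightarrow> u \<inter> B = w \<and> j \<notin> u" for u
    using assms by (cases "j \<in> u") (auto simp: Int_insert_right)
  then show "trace_mult W (insert j B) w = card {u\<in>{u\<in>W. u \<inter> B = w}. j \<notin> u}"
    unfolding trace_mult_def by (metis (mono_tags, lifting) mem_Collect_eq)
  have "u \<inter> insert j B = insert j w \<longleftrightarrow> u \<inter> B = w \<and> j \<in> u" for u
    using assms by (cases "j \<in> u") (auto simp: Int_insert_right insert_ident)
  then show "trace_mult W (insert j B) (insert j w) = card {u\<in>{u\<in>W. u \<inter> B = w}. j \<in> u}"
    unfolding trace_mult_def by (metis (mono_tags, lifting) mem_Collect_eq)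
qed

lemma card_diff_card_proj_eq:
  assumes "finite W"
  shows "card W - card (proj W B) = (\<Sum>w\<in>proj W B. card {u\<in>W. u \<inter> B = w} - 1)"
proof -
  have "finite (proj W B)" unfolding proj_def using assms by simp
  have "(\<Sum>w\<in>proj W B. \<Sum>u\<in>{u\<in>W. u \<inter> B = w}. 1) = (\<Sum>u\<in>W. 1::nat)"
    by (rule sum.group) (use assms \<open>finite (proj W B)\<close> in \<open>auto simp: proj_def\<close>)
  moreover have "1 \<le> card {u\<in>W. u \<inter> B = w}" if "w \<in> proj W B" for w
    using that assms unfolding proj_def by (auto simp: Suc_le_eq card_gt_0_iff)
  ultimately show ?thesis by (simp add: sum_subtractf_nat)
qed

lemma sum_min_fiber_le_split_weight:
  assumes "finite B" "j \<notin> B"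
  shows "(\<Sum>w\<in>proj W B. min (card {u\<in>{u\<in>W. u \<inter> B = w}. j \<notin> u}) (card {u\<in>{u\<in>W. u \<inter> B = w}. j \<in> u}))
    \<le> split_weight W B j"
proof -
  have "(\<Sum>w\<in>proj W B. min (card {u\<in>{u\<in>W. u \<inter> B = w}. j \<notin> u}) (card {u\<in>{u\<in>W. u \<inter> B = w}. j \<in> u}))
      \<le> (\<Sum>w\<in>Pow B. min (card {u\<in>{u\<in>W. u \<inter> B = w}. j \<notin> u}) (card {u\<in>{u\<in>W. u \<inter> B = w}. j \<in> u}))"
    using assms(1) by (intro sum_mono2) (auto simp: proj_def)
  also have "\<dots> = split_weight W B j"
    unfolding split_weight_def using assms(2)
    by (intro sum.cong refl) (simp add: trace_mult_insert_eq_card_fiber)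
  finally show ?thesis .
qed

text \<open>The fibers of the projection onto B are \<delta>-separated families differing only outside B.\<close>
lemma separated_deficit_le_sum_split_weight:
  assumes "finite G" "W \<subseteq> Pow G" "separated \<delta> W" "B \<subseteq> G"
  shows "\<delta> * (card W - card (proj W B)) \<le> 2 * (\<Sum>j\<in>G - B. split_weight W B j)"
proof -
  define fiber where "fiber w = {u\<in>W. u \<inter> B = w}" for w
  define m where "m w j = min (card {u\<in>fiber w. j \<notin> u}) (card {u\<in>fiber w. j \<in> u})" for w j
  have "finite W" using assms(1,2) finite_subset by (metis finite_Pow_iff)
  have "\<delta> * (card W - card (proj W B)) = (\<Sum>w\<in>proj W B. (card (fiber w) - 1) * \<delta>)"
    unfolding card_diff_card_proj_eq[OF \<open>finite W\<close>] fiber_def by (simp add: sum_distrib_left mult.commute)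
  also have "\<dots> \<le> (\<Sum>w\<in>proj W B. 2 * (\<Sum>j\<in>G - B. m w j))"
  proof (rule sum_mono)
    fix w
    show "(card (fiber w) - 1) * \<delta> \<le> 2 * (\<Sum>j\<in>G - B. m w j)"
      unfolding m_def
    proof (rule separated_card_le_sum_min)
      show "finite (G - B)" "finite (fiber w)" using assms(1) \<open>finite W\<close> by (auto simp: fiber_def)
      show "separated \<delta> (fiber w)" using assms(3) by (rule separated_subset) (auto simp: fiber_def)
      show "(u - v) \<union> (v - u) \<subseteq> G - B" if "u \<in> fiber w" "v \<in> fiber w" for u v
        using that assms(2) unfolding fiber_def by blast
    qed
  qed
  also have "\<dots> = 2 * (\<Sum>j\<in>G - B. \<Sum>w\<in>proj W B. m w j)"
    by (simp add: sum_distrib_left sum.swap[of _ "G - B"])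
  also have "\<dots> \<le> 2 * (\<Sum>j\<in>G - B. split_weight W B j)"
    unfolding m_def fiber_def using assms(1,4) finite_subset
    by (intro mult_le_mono2 sum_mono sum_min_fiber_le_split_weight) auto
  finally show ?thesis .
qed

lemma card_proj_le: "finite W \<Longrightarrow> card (proj W B) \<le> card W"
  unfolding proj_def by (rule card_image_le)

lemma finite_subsets_of_card: "finite G \<Longrightarrow> finite {B. B \<subseteq> G \<and> card B = m}"
  by (rule finite_subset[of _ "Pow G"]) auto

text \<open>Both sides enumerate the pairs (B, j) with j \<notin> B, via A = insert j B.\<close>
lemma sum_subsets_Diff_eq_sum_subsets_Suc:
  assumes "finite G"
  shows "(\<Sum>B\<in>{B. B \<subseteq> G \<and> card B = m}. \<Sum>j\<in>G - B. g B j)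
       = (\<Sum>A\<in>{A. A \<subseteq> G \<and> card A = Suc m}. \<Sum>j\<in>A. g (A - {j}) j)"
proof -
  define S where "S = (SIGMA B:{B. B \<subseteq> G \<and> card B = m}. G - B)"
  define T where "T = (SIGMA A:{A. A \<subseteq> G \<and> card A = Suc m}. A)"
  have "(\<Sum>B\<in>{B. B \<subseteq> G \<and> card B = m}. \<Sum>j\<in>G - B. g B j) = (\<Sum>(B, j)\<in>S. g B j)"
    unfolding S_def using assms by (intro sum.Sigma finite_subsets_of_card) auto
  also have "\<dots> = (\<Sum>(A, j)\<in>T. g (A - {j}) j)"
  proof (rule sum.reindex_bij_witness[where i="\<lambda>(A, j). (A - {j}, j)" and j="\<lambda>(B, j). (insert j B, j)"])
    fix a assume "a \<in> S"
    then obtain B j where a: "a = (B, j)" "B \<subseteq> G" "card B = m" "j \<in> G" "j \<notin> B"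
      unfolding S_def by auto
    have "finite B" using a(2) assms finite_subset by auto
    then show "(\<lambda>(A, j). (A - {j}, j)) ((\<lambda>(B, j). (insert j B, j)) a) = a"
      and "(\<lambda>(B, j). (insert j B, j)) a \<in> T"
      and "(\<lambda>(A, j). g (A - {j}) j) ((\<lambda>(B, j). (insert j B, j)) a) = (\<lambda>(B, j). g B j) a"
      using a unfolding T_def by auto
  next
    fix b assume "b \<in> T"
    then obtain A j where b: "b = (A, j)" "A \<subseteq> G" "card A = Suc m" "j \<in> A"
      unfolding T_def by auto
    have "finite A" using b(2) assms finite_subset by auto
    then show "(\<lambda>(B, j). (insert j B, j)) ((\<lambda>(A, j). (A - {j}, j)) b) = b"
      and "(\<lambda>(A, j). (A - {j}, j)) b \<in> S"
      using b unfolding S_def by auto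
  qed
  also have "\<dots> = (\<Sum>A\<in>{A. A \<subseteq> G \<and> card A = Suc m}. \<Sum>j\<in>A. g (A - {j}) j)"
    unfolding T_def using assms
    by (intro sum.Sigma[symmetric] finite_subsets_of_card) (auto intro: finite_subset)
  finally show ?thesis .
qed

lemma sum_split_weight_le:
  assumes "finite A" "finite W" "vc_dim_le A W d"
  shows "(\<Sum>j\<in>A. split_weight W (A - {j}) j) \<le> d * card W"
proof -
  have "(\<Sum>j\<in>A. split_weight W (A - {j}) j)
      = (\<Sum>j\<in>A. \<Sum>p\<in>Pow (A - {j}). min (trace_mult W A p) (trace_mult W A (insert j p)))"
    unfolding split_weight_def by (intro sum.cong refl) (simp add: insert_absorb)
  also have "\<dots> = (\<Sum>(j, p)\<in>(SIGMA j:A. Pow (A - {j})). min (trace_mult W A p) (trace_mult W A (insert j p)))"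
    using assms(1) by (intro sum.Sigma) auto
  also have "\<dots> \<le> d * card W" using assms by (rule sum_min_trace_mult_le)
  finally show ?thesis .
qed

lemma card_subsets_Suc_mult:
  assumes "finite G"
  shows "card {A. A \<subseteq> G \<and> card A = Suc m} * Suc m = card {B. B \<subseteq> G \<and> card B = m} * (card G - m)"
proof -
  have "(\<Sum>B\<in>{B. B \<subseteq> G \<and> card B = m}. \<Sum>j\<in>G - B. 1::nat)
      = (\<Sum>A\<in>{A. A \<subseteq> G \<and> card A = Suc m}. \<Sum>j\<in>A. 1)"
    using assms by (rule sum_subsets_Diff_eq_sum_subsets_Suc)
  moreover have "card (G - B) = card G - m" if "B \<subseteq> G" "card B = m" for B
    using that assms by (simp add: card_Diff_subset finite_subset)
  ultimately show ?thesis by (simp add: mult.commute)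
qed

text \<open>The loss card W - card (proj W B) is charged to split weights; regrouping the pairs (B, j)
  by A = insert j B, their total is bounded by the weighted edge bound on each (m + 1)-set A.\<close>
lemma sampling_card_le_sum_card_proj:
  assumes "finite G" "W \<subseteq> Pow G" "separated \<delta> W" "0 < \<delta>" "vc_dim_le G W d0"
    and large: "4 * d0 * card G \<le> \<delta> * Suc m"
  shows "card {B. B \<subseteq> G \<and> card B = m} * card W
    \<le> 2 * (\<Sum>B\<in>{B. B \<subseteq> G \<and> card B = m}. card (proj W B))"
proof -
  define Bs where "Bs = {B. B \<subseteq> G \<and> card B = m}"
  define Bs1 where "Bs1 = {A. A \<subseteq> G \<and> card A = Suc m}"
  define X where "X = card Bs * card W"
  define S where "S = (\<Sum>B\<in>Bs. card (proj W B))"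
  have "finite W" using assms(1,2) by (metis finite_Pow_iff finite_subset)
  have "S \<le> X" unfolding S_def X_def
    using sum_mono[of Bs "\<lambda>B. card (proj W B)" "\<lambda>_. card W"] card_proj_le[OF \<open>finite W\<close>] by simp
  have "\<delta> * (X - S) = (\<Sum>B\<in>Bs. \<delta> * (card W - card (proj W B)))"
    unfolding X_def S_def using card_proj_le[OF \<open>finite W\<close>]
    by (simp add: sum_subtractf_nat sum_distrib_left[symmetric] mult.commute)
  also have "\<dots> \<le> (\<Sum>B\<in>Bs. 2 * (\<Sum>j\<in>G - B. split_weight W B j))"
    unfolding Bs_def using assms(1-3) by (intro sum_mono separated_deficit_le_sum_split_weight) auto
  also have "\<dots> = 2 * (\<Sum>A\<in>Bs1. \<Sum>j\<in>A. split_weight W (A - {j}) j)"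
    unfolding Bs_def Bs1_def using assms(1)
    by (simp add: sum_distrib_left[symmetric] sum_subsets_Diff_eq_sum_subsets_Suc)
  also have "\<dots> \<le> 2 * (\<Sum>A\<in>Bs1. d0 * card W)"
  proof -
    have "vc_dim_le A W d0" if "A \<in> Bs1" for A
      using that assms(5) unfolding Bs1_def by (intro vc_dim_le_trace_mono[OF assms(5)]) auto
    then show ?thesis
      using assms(1) \<open>finite W\<close> unfolding Bs1_def
      by (intro mult_le_mono2 sum_mono sum_split_weight_le) (auto intro: finite_subset)
  qed
  also have "\<dots> = 2 * d0 * card W * card Bs1" by simp
  finally have deficit: "\<delta> * (X - S) \<le> 2 * d0 * card W * card Bs1" .
  have "(\<delta> * Suc m) * (2 * (X - S)) \<le> 4 * d0 * card W * (card Bs1 * Suc m)"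
    using mult_le_mono2[OF deficit, of "2 * Suc m"] by (simp add: algebra_simps)
  also have "\<dots> \<le> 4 * d0 * card W * (card Bs * card G)"
    unfolding Bs_def Bs1_def card_subsets_Suc_mult[OF assms(1)] by simp
  also have "\<dots> = (4 * d0 * card G) * X" unfolding X_def by (simp add: algebra_simps)
  also have "\<dots> \<le> (\<delta> * Suc m) * X" using large by (rule mult_le_mono1)
  finally have "2 * (X - S) \<le> X" using assms(4) by simp
  then show ?thesis using \<open>S \<le> X\<close> unfolding X_def S_def Bs_def by linarith
qed

section \<open>Short vectors\<close>

lemma card_subsets_containing:
  assumes "finite G" "i \<in> G" "1 \<le> m"
  shows "card {B. B \<subseteq> G \<and> card B = m \<and> i \<in> B} = (card G - 1) choose (m - 1)"
proof -
  have "{B. B \<subseteq> G \<and> card B = m \<and> i \<in> B} = insert i ` {B. B \<subseteq> G - {i} \<and> card B = m - 1}"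
  proof (intro equalityI subsetI)
    fix B assume B: "B \<in> {B. B \<subseteq> G \<and> card B = m \<and> i \<in> B}"
    then have "finite B" using assms(1) finite_subset by blast
    then have "B = insert i (B - {i})" "card (B - {i}) = m - 1" using B by auto
    then show "B \<in> insert i ` {B. B \<subseteq> G - {i} \<and> card B = m - 1}" using B by blast
  next
    fix B assume "B \<in> insert i ` {B. B \<subseteq> G - {i} \<and> card B = m - 1}"
    then obtain B' where B': "B = insert i B'" "B' \<subseteq> G - {i}" "card B' = m - 1" by auto
    have "finite B'" "i \<notin> B'" using B'(2) assms(1) finite_subset by blast+
    then have "card B = m" using B'(1,3) assms(3) by simp
    then show "B \<in> {B. B \<subseteq> G \<and> card B = m \<and> i \<in> B}" using B' assms(2) by auto
  qed
  moreover have "inj_on (insert i) {B. B \<subseteq> G - {i} \<and> card B = m - 1}"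
    unfolding inj_on_def by auto
  ultimately have "card {B. B \<subseteq> G \<and> card B = m \<and> i \<in> B} = card {B. B \<subseteq> G - {i} \<and> card B = m - 1}"
    by (simp add: card_image)
  also have "\<dots> = (card G - 1) choose (m - 1)" using assms(1,2) by (simp add: n_subsets)
  finally show ?thesis .
qed

lemma sum_card_Int_subsets:
  assumes "finite G" "u \<subseteq> G" "1 \<le> m"
  shows "(\<Sum>B\<in>{B. B \<subseteq> G \<and> card B = m}. card (u \<inter> B)) = card u * ((card G - 1) choose (m - 1))"
proof -
  have "finite u" using assms(1,2) finite_subset by auto
  have "(\<Sum>B\<in>{B. B \<subseteq> G \<and> card B = m}. card (u \<inter> B))
      = (\<Sum>B\<in>{B. B \<subseteq> G \<and> card B = m}. card {i\<in>u. i \<in> B})"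
    by (simp add: Int_def)
  also have "\<dots> = (\<Sum>i\<in>u. card {B\<in>{B. B \<subseteq> G \<and> card B = m}. i \<in> B})"
    using assms(1) \<open>finite u\<close> by (intro sum_card_filter_swap finite_subsets_of_card)
  also have "\<dots> = (\<Sum>i\<in>u. (card G - 1) choose (m - 1))"
  proof (rule sum.cong)
    fix i assume "i \<in> u"
    have "{B\<in>{B. B \<subseteq> G \<and> card B = m}. i \<in> B} = {B. B \<subseteq> G \<and> card B = m \<and> i \<in> B}" by blast
    moreover have "i \<in> G" using assms(2) \<open>i \<in> u\<close> by blast
    ultimately show "card {B\<in>{B. B \<subseteq> G \<and> card B = m}. i \<in> B} = (card G - 1) choose (m - 1)"
      using card_subsets_containing[OF assms(1) _ assms(3)] by simp
  qed simp
  finally show ?thesis by simp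
qed

text \<open>Markov's inequality for the size of u \<inter> B, B a uniformly random m-subset of G:
  the expected size is card u * m / card G.\<close>
lemma card_heavy_subsets_le_quarter:
  assumes "finite G" "u \<subseteq> G" "card u \<le> k" "1 \<le> m"
    and large: "4 * k * m \<le> Suc t * card G"
  shows "4 * card {B\<in>{B. B \<subseteq> G \<and> card B = m}. t < card (u \<inter> B)} \<le> card {B. B \<subseteq> G \<and> card B = m}"
proof (cases "G = {}")
  case False
  define Bs where "Bs = {B. B \<subseteq> G \<and> card B = m}"
  define h where "h = card {B\<in>Bs. t < card (u \<inter> B)}"
  define b where "b = (card G - 1) choose (m - 1)"
  have "finite Bs" unfolding Bs_def using assms(1) by (rule finite_subsets_of_card)
  have "Suc t * h = (\<Sum>B\<in>{B\<in>Bs. t < card (u \<inter> B)}. Suc t)" unfolding h_def by simp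
  also have "\<dots> \<le> (\<Sum>B\<in>{B\<in>Bs. t < card (u \<inter> B)}. card (u \<inter> B))" by (rule sum_mono) simp
  also have "\<dots> \<le> (\<Sum>B\<in>Bs. card (u \<inter> B))" using \<open>finite Bs\<close> by (intro sum_mono2) auto
  also have "\<dots> = card u * b" unfolding Bs_def b_def using assms(1,2,4) by (rule sum_card_Int_subsets)
  also have "\<dots> \<le> k * b" using assms(3) by simp
  finally have markov: "Suc t * h \<le> k * b" .
  have binom: "card G * b = m * card Bs"
    unfolding Bs_def b_def using assms(1,4) times_binomial_minus1_eq[of m "card G"]
    by (simp add: n_subsets)
  have "(Suc t * card G) * (4 * h) = 4 * card G * (Suc t * h)" by (simp only: ac_simps)
  also have "\<dots> \<le> 4 * card G * (k * b)" using markov by simp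
  also have "\<dots> = (4 * k * m) * card Bs" using binom by (simp add: mult_ac)
  also have "\<dots> \<le> (Suc t * card G) * card Bs" using large by (rule mult_le_mono1)
  finally have "(Suc t * card G) * (4 * h) \<le> (Suc t * card G) * card Bs" .
  moreover have "0 < card G" using False assms(1) by (simp add: card_gt_0_iff)
  ultimately have "4 * h \<le> card Bs" by simp
  then show ?thesis unfolding h_def Bs_def .
qed (use assms(2) in simp)

lemma sum_card_heavy_le_quarter:
  assumes "finite G" "W \<subseteq> Pow G" "finite W" "\<forall>u\<in>W. card u \<le> k" "1 \<le> m"
    and "4 * k * m \<le> Suc t * card G"
  shows "4 * (\<Sum>B\<in>{B. B \<subseteq> G \<and> card B = m}. card {u\<in>W. t < card (u \<inter> B)})
    \<le> card W * card {B. B \<subseteq> G \<and> card B = m}"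
proof -
  define Bs where "Bs = {B. B \<subseteq> G \<and> card B = m}"
  have "finite Bs" unfolding Bs_def using assms(1) by (rule finite_subsets_of_card)
  have "4 * (\<Sum>B\<in>Bs. card {u\<in>W. t < card (u \<inter> B)}) = (\<Sum>u\<in>W. 4 * card {B\<in>Bs. t < card (u \<inter> B)})"
    unfolding sum_card_filter_swap[OF \<open>finite Bs\<close> assms(3)] by (simp add: sum_distrib_left)
  also have "\<dots> \<le> (\<Sum>u\<in>W. card Bs)"
    unfolding Bs_def using assms by (intro sum_mono card_heavy_subsets_le_quarter) auto
  finally show ?thesis unfolding Bs_def by simp
qed

lemma card_proj_le_light_plus_heavy:
  assumes "W \<subseteq> V" "finite V"
  shows "card (proj W B) \<le> card {w\<in>proj V B. vlen w \<le> t} + card {u\<in>W. t < card (u \<inter> B)}"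
proof -
  define light where "light = {w\<in>proj V B. vlen w \<le> t}"
  define heavy where "heavy = {u\<in>W. t < card (u \<inter> B)}"
  have "proj W B \<subseteq> light \<union> (\<lambda>u. u \<inter> B) ` heavy"
  proof
    fix w assume "w \<in> proj W B"
    then obtain u where u: "u \<in> W" "w = u \<inter> B" unfolding proj_def by auto
    then have "w \<in> proj V B" using assms(1) unfolding proj_def by auto
    then show "w \<in> light \<union> (\<lambda>u. u \<inter> B) ` heavy"
      using u unfolding light_def heavy_def vlen_def by (cases "card w \<le> t") auto
  qed
  moreover have "finite W" using assms finite_subset by blast
  then have "finite light" "finite heavy"
    using assms(2) unfolding light_def heavy_def proj_def by auto
  ultimately have "card (proj W B) \<le> card (light \<union> (\<lambda>u. u \<inter> B) ` heavy)"
    by (intro card_mono) auto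
  also have "\<dots> \<le> card light + card heavy"
    using card_Un_le[of light "(\<lambda>u. u \<inter> B) ` heavy"] card_image_le[OF \<open>finite heavy\<close>, of "\<lambda>u. u \<inter> B"]
    by linarith
  finally show ?thesis unfolding light_def heavy_def .
qed

lemma clarkson_shor_light_bound:
  assumes "clarkson_shor n V d d1 C" "B \<subseteq> {..<n}" "1 \<le> t" "1 \<le> card B"
  shows "real (card {w\<in>proj V B. vlen w \<le> t}) \<le> C * real (card B) powr d1 * real (min (card B) t) powr (real d - d1)"
proof -
  have "finite B" using assms(2) finite_subset by blast
  then have "vlen w \<le> card B" if "w \<in> proj V B" for w
    using that unfolding proj_def vlen_def by (auto intro: card_mono)
  then have eq: "{w\<in>proj V B. vlen w \<le> t} = {w\<in>proj V B. vlen w \<le> min (card B) t}"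
    by (auto simp: min_def intro: order_trans)
  have cs: "real (card {w\<in>proj V I. vlen w \<le> k'}) \<le> C * real (card I) powr d1 * real k' powr (real d - d1)"
    if "I \<subseteq> {..<n}" "1 \<le> k'" "k' \<le> card I" for I k'
    using assms(1) that unfolding clarkson_shor_def by blast
  show ?thesis unfolding eq by (rule cs) (use assms(2-4) in auto)
qed

lemma card_le_clarkson_shor_bound:
  assumes "clarkson_shor n V d d1 C" "W \<subseteq> V" "V \<subseteq> Pow {..<n}" "\<forall>v\<in>W. vlen v \<le> k"
    and "1 \<le> k" "k \<le> n"
  shows "real (card W) \<le> C * real n powr d1 * real k powr (real d - d1)"
proof -
  have "W \<subseteq> {w\<in>proj V {..<n}. vlen w \<le> k}"
  proof
    fix w assume "w \<in> W"
    then have "w \<in> V" "w = w \<inter> {..<n}" "vlen w \<le> k" using assms(2-4) by auto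
    then show "w \<in> {w\<in>proj V {..<n}. vlen w \<le> k}" unfolding proj_def by blast
  qed
  moreover have "finite V" using assms(3) finite_subset by (metis finite_Pow_iff finite_lessThan)
  ultimately have "card W \<le> card {w\<in>proj V {..<n}. vlen w \<le> k}"
    by (intro card_mono) (auto simp: proj_def)
  also have "real \<dots> \<le> C * real n powr d1 * real k powr (real d - d1)"
    using assms(1)[unfolded clarkson_shor_def, rule_format, of "{..<n}" k] assms(5,6) by simp
  finally show ?thesis by simp
qed

lemma card_proj_le_shallow_plus_heavy:
  assumes "clarkson_shor n V d d1 C" "W \<subseteq> V" "finite V" "B \<subseteq> {..<n}" "1 \<le> t" "1 \<le> card B"
  shows "real (card (proj W B))
    \<le> C * real (card B) powr d1 * real (min (card B) t) powr (real d - d1) + real (card {u\<in>W. t < card (u \<inter> B)})"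
  using clarkson_shor_light_bound[OF assms(1,4-6)] card_proj_le_light_plus_heavy[OF assms(2,3), of B t]
  by linarith

lemma shallow_packing_bound:
  fixes d :: nat and d1 C :: real
  assumes "V \<subseteq> Pow {..<n}" "clarkson_shor n V d d1 C"
    and "W \<subseteq> V" "separated \<delta> W" "0 < \<delta>" "\<forall>v\<in>W. vlen v \<le> k" "vc_dim_le {..<n} W d0"
    and "1 \<le> m" "m \<le> n" "4 * d0 * n \<le> \<delta> * Suc m"
    and "1 \<le> t" "4 * k * m \<le> Suc t * n"
  shows "real (card W) \<le> 4 * (C * real m powr d1 * real (min m t) powr (real d - d1))"
proof -
  define Bs where "Bs = {B. B \<subseteq> {..<n} \<and> card B = m}"
  define N where "N = card Bs"
  define Q where "Q = C * real m powr d1 * real (min m t) powr (real d - d1)"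
  define heavy where "heavy B = card {u\<in>W. t < card (u \<inter> B)}" for B
  have "finite V" using assms(1) finite_subset by (metis finite_Pow_iff finite_lessThan)
  then have "finite W" using assms(3) finite_subset by blast
  have "finite Bs" unfolding Bs_def by (simp add: finite_subsets_of_card)
  have "0 < N" unfolding N_def Bs_def using assms(9) by (simp add: n_subsets zero_less_binomial)
  have "W \<subseteq> Pow {..<n}" using assms(1,3) by blast
  then have "N * card W \<le> 2 * (\<Sum>B\<in>Bs. card (proj W B))"
    unfolding N_def Bs_def using assms(4,5,7,10) by (intro sampling_card_le_sum_card_proj) auto
  then have "real (N * card W) \<le> real (2 * (\<Sum>B\<in>Bs. card (proj W B)))" by (rule of_nat_mono)
  then have sampled: "real N * real (card W) \<le> 2 * (\<Sum>B\<in>Bs. real (card (proj W B)))" by simp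
  have "real (card (proj W B)) \<le> Q + real (heavy B)" if "B \<in> Bs" for B
    using that assms(8,11) card_proj_le_shallow_plus_heavy[OF assms(2,3) \<open>finite V\<close>, of B t]
    unfolding Bs_def Q_def heavy_def by auto
  then have "(\<Sum>B\<in>Bs. real (card (proj W B))) \<le> (\<Sum>B\<in>Bs. Q + real (heavy B))"
    by (rule sum_mono)
  also have "\<dots> = real N * Q + real (\<Sum>B\<in>Bs. heavy B)"
    unfolding N_def by (simp add: sum.distrib)
  finally have light_heavy: "(\<Sum>B\<in>Bs. real (card (proj W B))) \<le> real N * Q + real (\<Sum>B\<in>Bs. heavy B)" .
  have "4 * (\<Sum>B\<in>Bs. heavy B) \<le> card W * N"
    unfolding heavy_def Bs_def N_def using \<open>W \<subseteq> Pow {..<n}\<close> \<open>finite W\<close> assms(6,8,12)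
    by (intro sum_card_heavy_le_quarter) (auto simp: vlen_def)
  then have "real (4 * (\<Sum>B\<in>Bs. heavy B)) \<le> real (card W * N)" by (rule of_nat_mono)
  then have "4 * real (\<Sum>B\<in>Bs. heavy B) \<le> real N * real (card W)" by (simp add: mult.commute)
  then have "real N * real (card W) \<le> 4 * (real N * Q)" using sampled light_heavy by linarith
  then have "real N * real (card W) \<le> real N * (4 * Q)" by (simp add: mult.left_commute)
  then show ?thesis unfolding Q_def using \<open>0 < N\<close> by simp
qed

section \<open>Choice of the parameters\<close>

lemma mult_powr_mono:
  fixes x y a b e :: real
  assumes "0 \<le> e" "e \<le> real d" "0 \<le> x" "x \<le> a" "0 \<le> y" "y \<le> b"
  shows "x powr e * y powr (real d - e) \<le> a powr e * b powr (real d - e)"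
  using assms by (intro mult_mono powr_mono2) auto

lemma powr_div_mult_powr_div:
  fixes c n k \<delta> e :: real
  assumes "0 < c" "0 < \<delta>" "0 \<le> n" "0 \<le> k"
  shows "(c * n / \<delta>) powr e * (c * k / \<delta>) powr (real d - e)
    = c ^ d * (n powr e * k powr (real d - e)) / \<delta> ^ d"
proof -
  have "(c * n / \<delta>) powr e * (c * k / \<delta>) powr (real d - e)
      = (c powr e * c powr (real d - e)) * (n powr e * k powr (real d - e)) / (\<delta> powr e * \<delta> powr (real d - e))"
    using assms by (simp add: powr_mult powr_divide)
  also have "c powr e * c powr (real d - e) = c ^ d"
    using assms by (simp add: powr_add[symmetric] powr_realpow)
  also have "\<delta> powr e * \<delta> powr (real d - e) = \<delta> ^ d"
    using assms by (simp add: powr_add[symmetric] powr_realpow)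
  finally show ?thesis .
qed

lemma real_nat_ceiling_le_add_one: "0 \<le> x \<Longrightarrow> real (nat \<lceil>x\<rceil>) \<le> x + 1"
  using ceiling_correct[of x] by simp

text \<open>m \<approx> 4 (d0 + 1) n / \<delta> makes the sampling lemma applicable and t \<approx> 4 k m / n the Markov bound;
  then m = O(n / \<delta>) and t = O(k / \<delta>).\<close>
lemma sample_size:
  fixes d0 :: nat
  assumes "4 * (real d0 + 1) \<le> real \<delta>" "\<delta> \<le> n"
  obtains m where "1 \<le> m" "m \<le> n" "4 * d0 * n \<le> \<delta> * Suc m" "real m \<le> 5 * (real d0 + 1) * (n / \<delta>)"
proof -
  define r where "r = real n / \<delta>"
  define m where "m = nat \<lceil>4 * ((real d0 + 1) * r)\<rceil>"
  have "0 < \<delta>" using assms(1) by simp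
  have "1 \<le> r" unfolding r_def using \<open>0 < \<delta>\<close> assms(2) by simp
  have "1 \<le> (real d0 + 1) * r" using mult_mono[of 1 "real d0 + 1" 1 r] \<open>1 \<le> r\<close> by simp
  have m_large: "4 * ((real d0 + 1) * r) \<le> real m" unfolding m_def by (rule real_nat_ceiling_ge)
  then have "1 \<le> m" using \<open>1 \<le> (real d0 + 1) * r\<close> by linarith
  have "real m \<le> 4 * ((real d0 + 1) * r) + 1"
    unfolding m_def using \<open>1 \<le> r\<close> by (intro real_nat_ceiling_le_add_one) simp
  then have m_small: "real m \<le> 5 * ((real d0 + 1) * r)" using \<open>1 \<le> (real d0 + 1) * r\<close> by linarith
  have "4 * (real d0 + 1) * real n \<le> real \<delta> * real n" using assms(1) by (rule mult_right_mono) simp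
  then have "4 * ((real d0 + 1) * r) \<le> real n" unfolding r_def using \<open>0 < \<delta>\<close> by (simp add: field_simps)
  then have "m \<le> n" unfolding m_def by simp
  have "real (4 * d0 * n) \<le> real (\<delta> * Suc m)"
    using m_large \<open>0 < \<delta>\<close> unfolding r_def by (simp add: field_simps)
  show ?thesis
  proof (rule that)
    show "4 * d0 * n \<le> \<delta> * Suc m" using \<open>real (4 * d0 * n) \<le> real (\<delta> * Suc m)\<close> by (simp only: of_nat_le_iff)
    show "real m \<le> 5 * (real d0 + 1) * (n / \<delta>)" using m_small unfolding r_def by (simp only: mult.assoc)
  qed fact+
qed

lemma length_threshold:
  fixes d0 :: nat
  assumes "0 < \<delta>" "\<delta> \<le> n" "real \<delta> \<le> 2 * real k" "1 \<le> m" "real m \<le> 5 * (real d0 + 1) * (n / \<delta>)"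
  obtains t where "1 \<le> t" "4 * k * m \<le> Suc t * n" "real t \<le> 22 * (real d0 + 1) * k / \<delta>"
proof -
  define r where "r = real n / \<delta>"
  define s where "s = real k / \<delta>"
  define t where "t = nat \<lceil>4 * s * (m / r)\<rceil>"
  have "0 < n" using assms(1,2) by simp
  have "1 \<le> r" unfolding r_def using assms(1,2) by simp
  have "1 \<le> 2 * s" "0 \<le> s" unfolding s_def using assms(1,3) by simp_all
  have t_large: "4 * s * (m / r) \<le> real t" unfolding t_def by (rule real_nat_ceiling_ge)
  moreover have "0 < 4 * s * (m / r)" using \<open>1 \<le> 2 * s\<close> assms(4) \<open>1 \<le> r\<close> by simp
  ultimately have "1 \<le> t" by simp
  have "real m / r \<le> 5 * (real d0 + 1)"
    using assms(5) \<open>1 \<le> r\<close> unfolding r_def[symmetric] by (simp add: pos_divide_le_eq algebra_simps)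
  then have "4 * s * (m / r) \<le> 4 * s * (5 * (real d0 + 1))"
    using \<open>0 \<le> s\<close> by (intro mult_left_mono) auto
  moreover have "real t \<le> 4 * s * (m / r) + 1"
    unfolding t_def using \<open>1 \<le> r\<close> \<open>0 \<le> s\<close> by (intro real_nat_ceiling_le_add_one) simp
  moreover have "0 \<le> s * real d0" using \<open>0 \<le> s\<close> by simp
  moreover have "4 * s * (5 * (real d0 + 1)) = 20 * s + 20 * (s * real d0)"
    and "22 * (real d0 + 1) * s = 22 * s + 22 * (s * real d0)" by (simp_all add: algebra_simps)
  ultimately have "real t \<le> 22 * (real d0 + 1) * s" using \<open>1 \<le> 2 * s\<close> by linarith
  moreover have "real (4 * k * m) \<le> real (Suc t * n)"
    using t_large assms(1) \<open>0 < n\<close> unfolding r_def s_def by (simp add: field_simps)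
  ultimately show ?thesis using that \<open>1 \<le> t\<close> unfolding s_def of_nat_le_iff by simp
qed

lemma separated_card_bound_large_delta:
  fixes d d0 :: nat and d1 C :: real
  defines "c \<equiv> 22 * (real d0 + 1)"
  assumes "0 \<le> d1" "d1 \<le> real d" "0 < C"
    and "V \<subseteq> Pow {..<n}" "clarkson_shor n V d d1 C"
    and "W \<subseteq> V" "separated \<delta> W" "\<forall>v\<in>W. vlen v \<le> k" "vc_dim_le {..<n} W d0"
    and "4 * (real d0 + 1) \<le> real \<delta>" "\<delta> \<le> n" "1 \<le> k" "real \<delta> \<le> 2 * real k"
  shows "real (card W) \<le> 4 * C * ((c * n / \<delta>) powr d1 * (c * k / \<delta>) powr (real d - d1))"
proof -
  have "0 < \<delta>" using assms(11) by simp
  obtain m where m: "1 \<le> m" "m \<le> n" "4 * d0 * n \<le> \<delta> * Suc m" "real m \<le> 5 * (real d0 + 1) * (n / \<delta>)"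
    using sample_size[OF assms(11,12)] by blast
  obtain t where t: "1 \<le> t" "4 * k * m \<le> Suc t * n" "real t \<le> c * k / \<delta>"
    using length_threshold[OF \<open>0 < \<delta>\<close> assms(12,14) m(1,4)] unfolding c_def by blast
  have "real (card W) \<le> 4 * (C * real m powr d1 * real (min m t) powr (real d - d1))"
    using assms(5-8) \<open>0 < \<delta>\<close> assms(9,10) m(1-3) t(1,2) by (rule shallow_packing_bound)
  also have "\<dots> \<le> 4 * C * ((c * n / \<delta>) powr d1 * (c * k / \<delta>) powr (real d - d1))"
  proof -
    have "5 * (real d0 + 1) * (n / \<delta>) \<le> c * (n / \<delta>)" unfolding c_def by (intro mult_right_mono) auto
    then have "real m \<le> c * n / \<delta>" using m(4) by simp
    then show ?thesis using t(3) assms(2,3,4) by (simp add: mult.assoc mult_powr_mono)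
  qed
  finally show ?thesis .
qed

lemma separated_card_bound:
  fixes d d0 :: nat and d1 C :: real
  assumes "0 \<le> d1" "d1 \<le> real d" "0 < C"
    and "V \<subseteq> Pow {..<n}" "clarkson_shor n V d d1 C"
    and "W \<subseteq> V" "separated \<delta> W" "\<forall>v\<in>W. vlen v \<le> k" "vc_dim_le {..<n} W d0"
    and "1 \<le> \<delta>" "\<delta> \<le> n" "1 \<le> k" "k \<le> n" "real \<delta> \<le> 2 * real k"
  shows "real (card W)
    \<le> 4 * C * (22 * (real d0 + 1)) ^ d * real n powr d1 * real k powr (real d - d1) / real \<delta> ^ d"
proof -
  define c where "c = 22 * (real d0 + 1)"
  define P where "P = real n powr d1 * real k powr (real d - d1)"
  have "0 < c" "0 \<le> P" "0 < real \<delta>" using assms(10) unfolding c_def P_def by auto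
  have "real (card W) \<le> 4 * C * c ^ d * P / real \<delta> ^ d"
  proof (cases "4 * (real d0 + 1) \<le> real \<delta>")
    case True
    then have "real (card W) \<le> 4 * C * ((c * n / \<delta>) powr d1 * (c * k / \<delta>) powr (real d - d1))"
      unfolding c_def using assms(11,14)
      by (intro separated_card_bound_large_delta[OF assms(1-9)]) auto
    then show ?thesis
      using \<open>0 < c\<close> \<open>0 < real \<delta>\<close> unfolding P_def by (simp add: powr_div_mult_powr_div)
  next
    case False
    have "real (card W) \<le> C * P"
      using card_le_clarkson_shor_bound[OF assms(5,6,4,8,12,13)] unfolding P_def by (simp add: mult.assoc)
    also have "\<dots> \<le> C * P * (c ^ d / real \<delta> ^ d)"
    proof -
      have "real \<delta> ^ d \<le> c ^ d" using False unfolding c_def by (intro power_mono) auto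
      then have "1 \<le> c ^ d / real \<delta> ^ d" using \<open>0 < real \<delta>\<close> by simp
      then have "C * P * 1 \<le> C * P * (c ^ d / real \<delta> ^ d)"
        using assms(3) \<open>0 \<le> P\<close> by (intro mult_left_mono) auto
      then show ?thesis by simp
    qed
    also have "\<dots> \<le> 4 * (C * P * (c ^ d / real \<delta> ^ d))"
    proof -
      have "0 \<le> C * P * (c ^ d / real \<delta> ^ d)"
        using assms(3) \<open>0 \<le> P\<close> \<open>0 < c\<close> \<open>0 < real \<delta>\<close> by simp
      then show ?thesis by linarith
    qed
    also have "\<dots> = 4 * C * c ^ d * P / real \<delta> ^ d" by (simp add: mult_ac)
    finally show ?thesis .
  qed
  then show ?thesis unfolding c_def P_def by (simp add: mult.assoc)
qed

lemma Mpack_attained: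
  assumes "finite V"
  obtains W where "W \<subseteq> V" "separated \<delta> W" "\<forall>v\<in>W. vlen v \<le> k" "Mpack \<delta> k V = card W"
proof -
  define Ss where "Ss = {card W | W. W \<subseteq> V \<and> separated \<delta> W \<and> (\<forall>v\<in>W. vlen v \<le> k)}"
  have "Ss \<subseteq> card ` Pow V" unfolding Ss_def by auto
  then have "finite Ss" using assms finite_subset by blast
  moreover have "Ss \<noteq> {}" unfolding Ss_def separated_def by auto
  ultimately have "Mpack \<delta> k V = Max Ss" unfolding Mpack_def Ss_def[symmetric] by (rule cSup_eq_Max)
  then have "Mpack \<delta> k V \<in> Ss" using Max_in[OF \<open>finite Ss\<close> \<open>Ss \<noteq> {}\<close>] by simp
  then show ?thesis using that unfolding Ss_def by auto
qed

theorem theorem2: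
  fixes d d0 :: nat and d1 C :: real
  assumes "d > 0" and "1 \<le> d1" and "d1 \<le> real d" and "C > 0"
  shows "\<exists>K>0. \<forall>(n::nat) (V::nat set set) (\<delta>::nat) (k::nat).
           n \<ge> 1 \<and> V \<subseteq> Pow {..<n} \<and> clarkson_shor n V d d1 C \<and> vc_dim n V = d0 \<and>
           1 \<le> \<delta> \<and> real \<delta> \<le> real n / 2 ^ (d0 + 1) \<and>
           1 \<le> k \<and> k \<le> n \<and> real \<delta> / 2 \<le> real k
           \<longrightarrow> real (Mpack \<delta> k V) \<le> K * real n powr d1 * real k powr (real d - d1) / real \<delta> ^ d"
proof (intro exI conjI allI impI)
  show "0 < 4 * C * (22 * (real d0 + 1)) ^ d" using assms(4) by simp
  fix n :: nat and V :: "nat set set" and \<delta> k :: nat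
  assume H: "n \<ge> 1 \<and> V \<subseteq> Pow {..<n} \<and> clarkson_shor n V d d1 C \<and> vc_dim n V = d0 \<and>
    1 \<le> \<delta> \<and> real \<delta> \<le> real n / 2 ^ (d0 + 1) \<and> 1 \<le> k \<and> k \<le> n \<and> real \<delta> / 2 \<le> real k"
  then have "finite V" by (meson finite_Pow_iff finite_lessThan finite_subset)
  then obtain W where W: "W \<subseteq> V" "separated \<delta> W" "\<forall>v\<in>W. vlen v \<le> k" "Mpack \<delta> k V = card W"
    by (rule Mpack_attained)
  have "vc_dim_le {..<n} W d0" using H vc_dim_le_vc_dim W(1) vc_dim_le_subset by metis
  moreover have "(1::real) \<le> 2 ^ (d0 + 1)" by (rule one_le_power) simp
  then have "real n / 2 ^ (d0 + 1) \<le> real n / 1" by (intro divide_left_mono) auto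
  then have "\<delta> \<le> n" using H by linarith
  ultimately show "real (Mpack \<delta> k V) \<le> 4 * C * (22 * (real d0 + 1)) ^ d * real n powr d1
      * real k powr (real d - d1) / real \<delta> ^ d"
    unfolding W(4) using H W(1-3) assms(2-4) by (intro separated_card_bound) auto
qed

end
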